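(* Let $a>1$, $C_j(n,a)=\binom{n}{j}\left(\frac{1+a}{2}\right)^{n-j}\left(\frac{1-a}{2}\right)^j$, $F_n(x,a)=\sum_{j=0}^nC_j(n,a)e^{i(1-\frac{2j}{n})x}$, and $\mathtt{H}_{k,n}(x)=h_k(x)F_n(x,a)$ for $k\geq0$, $n\geq1$. Then for every $z\in\mathbb{C}$, $$\mathcal{B}(\mathtt{H}_{k,n})(z)=\frac{1}{\sqrt{k!}}\sum_{j=0}^nC_j(n,a)\left(z+\tfrac{i}{\sqrt2}(1-2j/n)\right)^k e^{\frac{iz}{\sqrt2}(1-2j/n)-\frac14(1-2j/n)^2}.$$
   Context: $h_k(x)=(2^kk!\sqrt\pi)^{-1/2}H_k(x)e^{-x^2/2}$ are the normalized Hermite functions, $H_k(x)=(-1)^ke^{x^2}\frac{d^k}{dx^k}e^{-x^2}$. $\mathcal{B}(\varphi)(z)=\pi^{-1/4}\int_{\mathbb{R}}e^{-\frac12(z^2+x^2)+\sqrt2 zx}\varphi(x)\,dx$ is the Segal-Bargmann transform; it satisfies $\mathcal{B}(h_k)(z)=z^k/\sqrt{k!}$. *)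

theory Defs
  imports "HOL-Analysis.Analysis"
begin

definition hermite_poly :: "nat \<Rightarrow> real \<Rightarrow> real" where
  "hermite_poly k x = (-1) ^ k * exp (x\<^sup>2) * ((deriv ^^ k) (\<lambda>t. exp (- (t\<^sup>2))) x)"

definition hermite_fun :: "nat \<Rightarrow> real \<Rightarrow> real" where
  "hermite_fun k x = (2 ^ k * fact k * sqrt pi) powr (-1/2) * hermite_poly k x * exp (- (x\<^sup>2) / 2)"

definition bargmann :: "(real \<Rightarrow> complex) \<Rightarrow> complex \<Rightarrow> complex" where
  "bargmann \<phi> z = complex_of_real (pi powr (-1/4)) *
     (\<integral>x. exp (- (z\<^sup>2 + (complex_of_real x)\<^sup>2) / 2 + complex_of_real (sqrt 2) * z * complex_of_real x)
              * \<phi> x \<partial>lborel)"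

definition Ccoef :: "nat \<Rightarrow> nat \<Rightarrow> real \<Rightarrow> real" where
  "Ccoef j n a = real (n choose j) * ((1 + a) / 2) ^ (n - j) * ((1 - a) / 2) ^ j"

definition Ffun :: "nat \<Rightarrow> real \<Rightarrow> real \<Rightarrow> complex" where
  "Ffun n x a = (\<Sum>j=0..n. complex_of_real (Ccoef j n a) *
       exp (\<i> * complex_of_real ((1 - 2 * real j / real n) * x)))"

definition Hkn :: "real \<Rightarrow> nat \<Rightarrow> nat \<Rightarrow> real \<Rightarrow> complex" where
  "Hkn a k n x = complex_of_real (hermite_fun k x) * Ffun n x a"

end

theory Submission
  imports Defs "HOL-Probability.Probability" "HOL-Computational_Algebra.Polynomial"
    "HOL-Real_Asymp.Real_Asymp"
begin

text \<open>
  Put b = sqrt 2 z + i t. Up to a constant factor, the Bargmann kernel times h_k(x) e^(i t x)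
  is e^(-z^2/2) e^(b x) times the k-th derivative of e^(-x^2). Integrating by parts k times
  gives (-b)^k times the integral of e^(b x - x^2), and completing the square turns that
  integral into the characteristic function of the standard normal distribution, so it
  equals sqrt pi e^(b^2/4). Hence the transform of h_k(x) e^(i t x) is
  (z + i t / sqrt 2)^k e^(i z t / sqrt 2 - t^2/4) / sqrt k!, and the theorem follows by
  linearity, F_n being a finite combination of such exponentials.
\<close>

fun gaussian_deriv_poly :: "nat \<Rightarrow> real poly" where
  "gaussian_deriv_poly 0 = 1"
| "gaussian_deriv_poly (Suc m) = pderiv (gaussian_deriv_poly m) - [:0, 2:] * gaussian_deriv_poly m"

definition gaussian_deriv :: "nat \<Rightarrow> real \<Rightarrow> real" where
  "gaussian_deriv m x = poly (gaussian_deriv_poly m) x * exp (- (x\<^sup>2))"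

lemma has_real_derivative_gaussian_deriv:
  "(gaussian_deriv m has_real_derivative gaussian_deriv (Suc m) x) (at x)"
  unfolding gaussian_deriv_def by (auto intro!: derivative_eq_intros simp: algebra_simps)

lemma continuous_on_gaussian_deriv [continuous_intros]: "continuous_on A (gaussian_deriv m)"
  unfolding gaussian_deriv_def by (intro continuous_intros)

lemma higher_deriv_gaussian: "(deriv ^^ m) (\<lambda>t. exp (- (t\<^sup>2))) = gaussian_deriv m"
proof (induction m)
  case 0
  show ?case by (simp add: gaussian_deriv_def fun_eq_iff)
next
  case (Suc m)
  show ?case
    using has_real_derivative_gaussian_deriv by (simp add: Suc.IH fun_eq_iff DERIV_imp_deriv)
qed

lemma hermite_fun_eq_gaussian_deriv:
  "hermite_fun k x =
     (2 ^ k * fact k * sqrt pi) powr (-1/2) * (-1) ^ k * exp (x\<^sup>2 / 2) * gaussian_deriv k x"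
proof -
  have "exp (x\<^sup>2) * exp (- (x\<^sup>2) / 2) = exp (x\<^sup>2 / 2)"
    by (simp flip: exp_add)
  then show ?thesis
    unfolding hermite_fun_def hermite_poly_def higher_deriv_gaussian by (simp add: mult_ac)
qed

lemma power_div_fact_le_exp:
  assumes "(y::real) \<ge> 0"
  shows "y ^ n / fact n \<le> exp y"
proof -
  have s: "(\<lambda>n. y ^ n /\<^sub>R fact n) sums exp y" by (rule exp_converges)
  have "(\<Sum>n\<in>{n}. y ^ n /\<^sub>R fact n) \<le> (\<Sum>n. y ^ n /\<^sub>R fact n)"
    by (rule sum_le_suminf) (use s assms in \<open>auto simp: sums_iff\<close>)
  then show ?thesis using s by (simp add: sums_iff divide_inverse mult.commute)
qed

lemma poly_bounded_by_exp_abs: "\<exists>K. \<forall>x::real. \<bar>poly p x\<bar> \<le> K * exp \<bar>x\<bar>"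
proof -
  define K where "K = (\<Sum>i\<le>degree p. \<bar>coeff p i\<bar> * fact i)"
  have "\<bar>poly p x\<bar> \<le> K * exp \<bar>x\<bar>" for x
  proof -
    have "\<bar>poly p x\<bar> \<le> (\<Sum>i\<le>degree p. \<bar>coeff p i\<bar> * \<bar>x\<bar> ^ i)"
      unfolding poly_altdef by (rule order.trans[OF sum_abs]) (simp add: abs_mult power_abs)
    also have "\<dots> \<le> (\<Sum>i\<le>degree p. \<bar>coeff p i\<bar> * (fact i * exp \<bar>x\<bar>))"
      using power_div_fact_le_exp[of "\<bar>x\<bar>"]
      by (intro sum_mono mult_left_mono) (auto simp: field_simps)
    also have "\<dots> = K * exp \<bar>x\<bar>"
      by (simp add: K_def sum_distrib_left mult_ac)
    finally show ?thesis .
  qed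
  then show ?thesis by blast
qed

lemma gaussian_deriv_bound:
  "\<exists>K. \<forall>x. \<bar>gaussian_deriv m x\<bar> * exp (c * x) \<le> K * exp (- (x\<^sup>2) / 2)"
proof -
  obtain K where K: "\<And>x. \<bar>poly (gaussian_deriv_poly m) x\<bar> \<le> K * exp \<bar>x\<bar>"
    using poly_bounded_by_exp_abs by blast
  have "0 \<le> K" using K[of 0] by simp
  define d where "d = 1 + \<bar>c\<bar>"
  have "\<bar>gaussian_deriv m x\<bar> * exp (c * x) \<le> (K * exp (d\<^sup>2 / 2)) * exp (- (x\<^sup>2) / 2)" for x
  proof -
    have "\<bar>x\<bar> + c * x \<le> d * \<bar>x\<bar>"
      unfolding d_def using abs_ge_self[of "c * x"] by (simp add: abs_mult distrib_right)
    also have "\<dots> \<le> d\<^sup>2 / 2 + x\<^sup>2 / 2"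
      using sum_power2_ge_zero[of "d - \<bar>x\<bar>" 0] by (simp add: power2_eq_square algebra_simps)
    finally have exponent: "\<bar>x\<bar> + - (x\<^sup>2) + c * x \<le> d\<^sup>2 / 2 + - (x\<^sup>2) / 2"
      by simp
    have "\<bar>gaussian_deriv m x\<bar> * exp (c * x) \<le> K * (exp \<bar>x\<bar> * exp (- (x\<^sup>2)) * exp (c * x))"
      unfolding gaussian_deriv_def abs_mult using K[of x] by (auto simp: mult_ac intro!: mult_right_mono)
    also have "\<dots> \<le> K * (exp (d\<^sup>2 / 2) * exp (- (x\<^sup>2) / 2))"
      using exponent \<open>0 \<le> K\<close> by (intro mult_left_mono) (simp_all flip: exp_add)
    finally show ?thesis by (simp only: mult_ac)
  qed
  then show ?thesis by blast
qed

lemma cexp_gaussian_deriv_bound: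
  fixes b :: complex
  shows "\<exists>K. \<forall>x. norm (exp (b * of_real x) * of_real (gaussian_deriv m x)) \<le> K * exp (- (x\<^sup>2) / 2)"
proof -
  obtain K where "\<And>x. \<bar>gaussian_deriv m x\<bar> * exp (Re b * x) \<le> K * exp (- (x\<^sup>2) / 2)"
    using gaussian_deriv_bound by blast
  then show ?thesis
    by (intro exI[of _ K]) (simp add: norm_mult mult.commute)
qed

lemma integrable_exp_neg_square_half: "integrable lborel (\<lambda>x::real. exp (- (x\<^sup>2) / 2))"
proof -
  have "integrable lborel (\<lambda>x. sqrt (2 * pi) * std_normal_density x)"
    by (intro integrable_mult_right integrable_normal_density) simp
  then show ?thesis by (simp add: std_normal_density_def)
qed

lemma integrable_cexp_gaussian_deriv:
  fixes b :: complex
  shows "integrable lborel (\<lambda>x. exp (b * of_real x) * of_real (gaussian_deriv m x))"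
proof -
  obtain K where K: "\<And>x. norm (exp (b * of_real x) * of_real (gaussian_deriv m x)) \<le> K * exp (- (x\<^sup>2) / 2)"
    using cexp_gaussian_deriv_bound by blast
  show ?thesis
  proof (rule Bochner_Integration.integrable_bound)
    show "integrable lborel (\<lambda>x. K * exp (- (x\<^sup>2) / 2))"
      by (intro integrable_mult_right integrable_exp_neg_square_half)
    show "(\<lambda>x. exp (b * of_real x) * of_real (gaussian_deriv m x)) \<in> borel_measurable lborel"
      unfolding measurable_lborel2
      by (intro borel_measurable_continuous_onI continuous_intros)
    show "AE x in lborel. norm (exp (b * of_real x) * of_real (gaussian_deriv m x))
        \<le> norm (K * exp (- (x\<^sup>2) / 2))"
      unfolding real_norm_def by (intro AE_I2) (rule order.trans[OF K abs_ge_self])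
  qed
qed

lemma tendsto_cexp_gaussian_deriv:
  fixes b :: complex
  shows "((\<lambda>x. exp (b * of_real x) * of_real (gaussian_deriv m x)) \<longlongrightarrow> 0) at_top"
    and "((\<lambda>x. exp (b * of_real x) * of_real (gaussian_deriv m x)) \<longlongrightarrow> 0) at_bot"
proof -
  obtain K where K: "\<And>x. norm (exp (b * of_real x) * of_real (gaussian_deriv m x)) \<le> K * exp (- (x\<^sup>2) / 2)"
    using cexp_gaussian_deriv_bound by blast
  have "((\<lambda>x::real. K * exp (- (x\<^sup>2) / 2)) \<longlongrightarrow> 0) at_top"
    by (rule tendsto_mult_right_zero) real_asymp
  then show "((\<lambda>x. exp (b * of_real x) * of_real (gaussian_deriv m x)) \<longlongrightarrow> 0) at_top"
    by (rule Lim_null_comparison[rotated]) (use K in auto)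
  have "((\<lambda>x::real. K * exp (- (x\<^sup>2) / 2)) \<longlongrightarrow> 0) at_bot"
    by (rule tendsto_mult_right_zero) real_asymp
  then show "((\<lambda>x. exp (b * of_real x) * of_real (gaussian_deriv m x)) \<longlongrightarrow> 0) at_bot"
    by (rule Lim_null_comparison[rotated]) (use K in auto)
qed

lemma integral_cexp_gaussian_deriv_Suc:
  fixes b :: complex
  shows "(\<integral>x. exp (b * of_real x) * of_real (gaussian_deriv (Suc m) x) \<partial>lborel) =
     - b * (\<integral>x. exp (b * of_real x) * of_real (gaussian_deriv m x) \<partial>lborel)"
proof -
  define F where "F x = exp (b * of_real x) * of_real (gaussian_deriv m x)" for x
  define G where "G x = exp (b * of_real x) * of_real (gaussian_deriv (Suc m) x)" for x
  have iF: "integrable lborel F" and iG: "integrable lborel G"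
    unfolding F_def G_def by (rule integrable_cexp_gaussian_deriv)+
  have dF: "(F has_vector_derivative b * F x + G x) (at x)" for x
  proof -
    have "((\<lambda>u. exp (b * u)) has_field_derivative exp (b * of_real x) * b) (at (of_real x))"
      by (auto intro!: derivative_eq_intros)
    from has_vector_derivative_real_field[OF this]
    have "((\<lambda>x. exp (b * of_real x)) has_vector_derivative exp (b * of_real x) * b) (at x)" .
    from has_vector_derivative_mult[OF this has_vector_derivative_of_real[OF has_real_derivative_gaussian_deriv]]
    show ?thesis
      unfolding F_def G_def by (rule has_vector_derivative_eq_rhs) (simp add: algebra_simps)
  qed
  have "(LBINT x=-\<infinity>..\<infinity>. b * F x + G x) = 0 - 0"
  proof (rule interval_integral_FTC_integrable[where F = F])
    show "set_integrable lborel (einterval (-\<infinity>) \<infinity>) (\<lambda>x. b * F x + G x)"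
      using iF iG by (simp add: einterval_eq_UNIV set_integrable_def)
    show "((F \<circ> real_of_ereal) \<longlongrightarrow> 0) (at_right (-\<infinity>))"
      unfolding ereal_tendsto_simps1 F_def by (rule tendsto_cexp_gaussian_deriv)
    show "((F \<circ> real_of_ereal) \<longlongrightarrow> 0) (at_left \<infinity>)"
      unfolding ereal_tendsto_simps1 F_def by (rule tendsto_cexp_gaussian_deriv)
    show "isCont (\<lambda>x. b * F x + G x) x" for x
      unfolding F_def G_def
      by (intro continuous_intros continuous_on_interior[of UNIV]) auto
  qed (use dF in auto)
  then have "b * (\<integral>x. F x \<partial>lborel) + (\<integral>x. G x \<partial>lborel) = 0"
    using iF iG
    by (simp add: interval_lebesgue_integral_def einterval_eq_UNIV set_lebesgue_integral_def)
  then show ?thesis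
    unfolding F_def G_def by (simp add: eq_neg_iff_add_eq_0 add.commute)
qed

lemma integral_gaussian_cexp_imag:
  "(\<integral>u. of_real (exp (- (u\<^sup>2) / 2)) * exp (\<i> * of_real (\<theta> * u)) \<partial>lborel) =
     complex_of_real (sqrt (2 * pi) * exp (- (\<theta>\<^sup>2) / 2))"
proof -
  have "complex_of_real (exp (- (\<theta>\<^sup>2) / 2)) = char std_normal_distribution \<theta>"
    by (simp add: char_std_normal_distribution)
  also have "\<dots> = (\<integral>u. std_normal_density u *\<^sub>R exp (\<i> * of_real (\<theta> * u)) \<partial>lborel)"
    unfolding char_def by (subst integral_density) (auto simp: normal_density_nonneg)
  also have "\<dots> = of_real (1 / sqrt (2 * pi)) *
      (\<integral>u. of_real (exp (- (u\<^sup>2) / 2)) * exp (\<i> * of_real (\<theta> * u)) \<partial>lborel)"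
    by (simp add: std_normal_density_def scaleR_conv_of_real mult.assoc)
  finally show ?thesis by (simp add: field_simps)
qed

lemma cexp_linear_gaussian_complete_square:
  fixes b :: complex
  assumes "c\<^sup>2 = 1 / 2"
  shows "exp (b * of_real (Re b / 2 + c * u)) * of_real (exp (- ((Re b / 2 + c * u)\<^sup>2))) =
    exp (b\<^sup>2 / 4 + of_real ((Im b)\<^sup>2 / 4)) *
    (of_real (exp (- (u\<^sup>2) / 2)) * exp (\<i> * of_real ((Im b * c) * u)))"
proof -
  have "b * of_real (Re b / 2 + c * u) - of_real ((Re b / 2 + c * u)\<^sup>2) =
      b\<^sup>2 / 4 + of_real ((Im b)\<^sup>2 / 4) + (- of_real (u\<^sup>2 / 2) + \<i> * of_real ((Im b * c) * u))"
    using assms by (simp add: complex_eq_iff power2_eq_square field_simps)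
  then show ?thesis
    by (simp flip: exp_add exp_of_real exp_diff)
qed

lemma integral_cexp_linear_gaussian:
  fixes b :: complex
  shows "(\<integral>x. exp (b * of_real x) * of_real (exp (- (x\<^sup>2))) \<partial>lborel) = sqrt pi * exp (b\<^sup>2 / 4)"
proof -
  define c :: real where "c = 1 / sqrt 2"
  have c: "c \<noteq> 0" "c\<^sup>2 = 1 / 2" "\<bar>c\<bar> * sqrt (2 * pi) = sqrt pi"
    by (simp_all add: c_def power_divide real_sqrt_mult)
  have "(\<integral>x. exp (b * of_real x) * of_real (exp (- (x\<^sup>2))) \<partial>lborel) =
      \<bar>c\<bar> *\<^sub>R (\<integral>u. exp (b * of_real (Re b / 2 + c * u)) * of_real (exp (- ((Re b / 2 + c * u)\<^sup>2))) \<partial>lborel)"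
    by (rule lborel_integral_real_affine[OF c(1)])
  also have "\<dots> = \<bar>c\<bar> *\<^sub>R (exp (b\<^sup>2 / 4 + of_real ((Im b)\<^sup>2 / 4)) *
      of_real (sqrt (2 * pi) * exp (- ((Im b * c)\<^sup>2) / 2)))"
    by (simp only: cexp_linear_gaussian_complete_square[OF c(2)] integral_mult_right_zero
        integral_gaussian_cexp_imag)
  also have "\<dots> = sqrt pi * exp (b\<^sup>2 / 4)"
  proof -
    have cancel: "(Im b)\<^sup>2 / 4 + - ((Im b * c)\<^sup>2) / 2 = 0"
      using c(2) by (simp add: power_mult_distrib)
    have "exp (of_real ((Im b)\<^sup>2 / 4)) * of_real (exp (- ((Im b * c)\<^sup>2) / 2)) = (1 :: complex)"
      by (simp only: exp_of_real cancel flip: of_real_mult exp_add) simp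
    moreover have "\<bar>c\<bar> *\<^sub>R (exp (b\<^sup>2 / 4 + of_real ((Im b)\<^sup>2 / 4)) *
        of_real (sqrt (2 * pi) * exp (- ((Im b * c)\<^sup>2) / 2))) =
        of_real (\<bar>c\<bar> * sqrt (2 * pi)) * exp (b\<^sup>2 / 4) *
        (exp (of_real ((Im b)\<^sup>2 / 4)) * of_real (exp (- ((Im b * c)\<^sup>2) / 2)))"
      by (simp only: scaleR_conv_of_real exp_add of_real_mult mult_ac)
    ultimately show ?thesis
      using c(3) by simp
  qed
  finally show ?thesis .
qed

lemma integral_cexp_gaussian_deriv:
  fixes b :: complex
  shows "(\<integral>x. exp (b * of_real x) * of_real (gaussian_deriv m x) \<partial>lborel) =
     (- b) ^ m * sqrt pi * exp (b\<^sup>2 / 4)"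
proof (induction m)
  case 0
  show ?case
    using integral_cexp_linear_gaussian by (simp add: gaussian_deriv_def)
next
  case (Suc m)
  show ?case
    by (simp only: integral_cexp_gaussian_deriv_Suc Suc.IH) (simp add: mult_ac)
qed

definition bargmann_kernel :: "complex \<Rightarrow> real \<Rightarrow> complex" where
  "bargmann_kernel z x = exp (- (z\<^sup>2 + (of_real x)\<^sup>2) / 2 + of_real (sqrt 2) * z * of_real x)"

lemma bargmann_eq_integral_kernel:
  "bargmann \<phi> z = of_real (pi powr (-1/4)) * (\<integral>x. bargmann_kernel z x * \<phi> x \<partial>lborel)"
  by (simp add: bargmann_def bargmann_kernel_def)

lemma bargmann_sum:
  assumes "\<And>j. j \<in> A \<Longrightarrow> integrable lborel (\<lambda>x. bargmann_kernel z x * \<phi> j x)"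
  shows "bargmann (\<lambda>x. \<Sum>j\<in>A. c j * \<phi> j x) z = (\<Sum>j\<in>A. c j * bargmann (\<phi> j) z)"
proof -
  have "bargmann (\<lambda>x. \<Sum>j\<in>A. c j * \<phi> j x) z =
      of_real (pi powr (-1/4)) * (\<integral>x. (\<Sum>j\<in>A. c j * (bargmann_kernel z x * \<phi> j x)) \<partial>lborel)"
    unfolding bargmann_eq_integral_kernel sum_distrib_left by (simp only: mult_ac)
  also have "\<dots> = (\<Sum>j\<in>A. c j * bargmann (\<phi> j) z)"
    using assms
    by (simp add: integral_sum integrable_mult_right bargmann_eq_integral_kernel
        sum_distrib_left mult_ac)
  finally show ?thesis .
qed

lemma bargmann_kernel_hermite_fun_cexp:
  fixes z :: complex
  shows "bargmann_kernel z x * (of_real (hermite_fun k x) * exp (\<i> * of_real (t * x))) =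
     of_real ((2 ^ k * fact k * sqrt pi) powr (-1/2) * (-1) ^ k) * exp (- z\<^sup>2 / 2) *
     (exp ((sqrt 2 * z + \<i> * t) * of_real x) * of_real (gaussian_deriv k x))"
proof -
  have "- (z\<^sup>2 + (of_real x)\<^sup>2) / 2 + of_real (sqrt 2) * z * of_real x + of_real (x\<^sup>2 / 2) +
      \<i> * of_real (t * x) = - z\<^sup>2 / 2 + (sqrt 2 * z + \<i> * t) * of_real x"
    by (simp add: field_simps)
  then show ?thesis
    unfolding bargmann_kernel_def hermite_fun_eq_gaussian_deriv
    by (simp add: mult_ac add_ac flip: exp_add exp_of_real)
qed

lemma integrable_bargmann_kernel_hermite_fun_cexp:
  "integrable lborel
     (\<lambda>x. bargmann_kernel z x * (of_real (hermite_fun k x) * exp (\<i> * of_real (t * x))))"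
  unfolding bargmann_kernel_hermite_fun_cexp
  by (intro integrable_mult_right integrable_cexp_gaussian_deriv)

lemma hermite_fun_normalization:
  "pi powr (-1/4) * (2 ^ k * fact k * sqrt pi) powr (-1/2) * sqrt 2 ^ k * sqrt pi = 1 / sqrt (fact k)"
proof -
  have sqrt_powr: "sqrt 2 ^ k = (2 ^ k) powr (1/2)" "sqrt pi = pi powr (1/2)"
    by (simp_all add: powr_half_sqrt real_sqrt_power)
  have "pi powr (-1/4) * (2 ^ k * fact k * sqrt pi) powr (-1/2) * sqrt 2 ^ k * sqrt pi =
      ((2 ^ k) powr (-1/2) * (2 ^ k) powr (1/2)) * fact k powr (-1/2) *
      (pi powr (-1/4) * (pi powr (1/2)) powr (-1/2) * pi powr (1/2))"
    unfolding sqrt_powr by (simp add: powr_mult mult_ac)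
  also have "\<dots> = fact k powr (-1/2)"
    by (simp add: powr_powr flip: powr_add)
  also have "\<dots> = 1 / sqrt (fact k)"
    by (simp add: powr_minus_divide powr_half_sqrt)
  finally show ?thesis .
qed

lemma bargmann_hermite_fun_cexp:
  fixes z :: complex and t :: real
  shows "bargmann (\<lambda>x. of_real (hermite_fun k x) * exp (\<i> * of_real (t * x))) z =
    of_real (1 / sqrt (fact k)) *
    ((z + \<i> / of_real (sqrt 2) * of_real t) ^ k *
     exp (\<i> * z / of_real (sqrt 2) * of_real t - of_real (t\<^sup>2 / 4)))"
proof -
  define N where "N = (2 ^ k * fact k * sqrt pi) powr (-1/2)"
  define b where "b = sqrt 2 * z + \<i> * t"
  have sqrt2: "complex_of_real (sqrt 2) \<noteq> 0" "complex_of_real (sqrt 2) ^ 2 = 2"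
    by (simp_all flip: of_real_power)
  have sign: "of_real ((-1) ^ k) * (- b) ^ k = b ^ k"
    by (simp add: power_mult_distrib[symmetric])
  have b_power: "b ^ k = of_real (sqrt 2 ^ k) * (z + \<i> / of_real (sqrt 2) * of_real t) ^ k"
  proof -
    have "b = of_real (sqrt 2) * (z + \<i> / of_real (sqrt 2) * of_real t)"
      unfolding b_def using sqrt2 by (simp add: field_simps)
    then show ?thesis by (simp add: power_mult_distrib)
  qed
  have b_square: "exp (- z\<^sup>2 / 2) * exp (b\<^sup>2 / 4) =
      exp (\<i> * z / of_real (sqrt 2) * of_real t - of_real (t\<^sup>2 / 4))"
  proof -
    have "- z\<^sup>2 / 2 + b\<^sup>2 / 4 = \<i> * z / of_real (sqrt 2) * of_real t - of_real (t\<^sup>2 / 4)"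
      unfolding b_def using sqrt2 by (simp add: field_simps power2_eq_square)
    then show ?thesis by (simp flip: exp_add)
  qed
  have "bargmann (\<lambda>x. of_real (hermite_fun k x) * exp (\<i> * of_real (t * x))) z =
      of_real (pi powr (-1/4)) * (of_real (N * (-1) ^ k) * exp (- z\<^sup>2 / 2) *
        ((- b) ^ k * sqrt pi * exp (b\<^sup>2 / 4)))"
    unfolding bargmann_eq_integral_kernel bargmann_kernel_hermite_fun_cexp integral_mult_right_zero
      integral_cexp_gaussian_deriv N_def b_def ..
  also have "\<dots> = of_real (pi powr (-1/4) * N * sqrt pi) * (b ^ k * (exp (- z\<^sup>2 / 2) * exp (b\<^sup>2 / 4)))"
    unfolding of_real_mult sign[symmetric] by (simp only: mult_ac)
  also have "\<dots> = of_real (pi powr (-1/4) * N * sqrt 2 ^ k * sqrt pi) *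
      ((z + \<i> / of_real (sqrt 2) * of_real t) ^ k * (exp (- z\<^sup>2 / 2) * exp (b\<^sup>2 / 4)))"
    unfolding b_power of_real_mult by (simp only: mult_ac)
  finally show ?thesis
    unfolding b_square N_def hermite_fun_normalization .
qed

theorem theorem3p19:
  fixes a :: real and k n :: nat and z :: complex
  assumes "a > 1" and "n \<ge> 1"
  shows "bargmann (Hkn a k n) z =
    complex_of_real (1 / sqrt (fact k)) *
    (\<Sum>j=0..n. complex_of_real (Ccoef j n a) *
       (z + \<i> / complex_of_real (sqrt 2) * complex_of_real (1 - 2 * real j / real n)) ^ k *
       exp (\<i> * z / complex_of_real (sqrt 2) * complex_of_real (1 - 2 * real j / real n)
            - complex_of_real ((1 - 2 * real j / real n)\<^sup>2 / 4)))"
proof -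
  define t where "t j = 1 - 2 * real j / real n" for j
  have Hkn_expand: "Hkn a k n = (\<lambda>x. \<Sum>j=0..n. of_real (Ccoef j n a) *
      (of_real (hermite_fun k x) * exp (\<i> * of_real (t j * x))))"
    by (simp add: fun_eq_iff Hkn_def Ffun_def t_def sum_distrib_left mult_ac)
  have "bargmann (Hkn a k n) z = (\<Sum>j=0..n. of_real (Ccoef j n a) *
      bargmann (\<lambda>x. of_real (hermite_fun k x) * exp (\<i> * of_real (t j * x))) z)"
    unfolding Hkn_expand by (rule bargmann_sum[OF integrable_bargmann_kernel_hermite_fun_cexp])
  then show ?thesis
    unfolding bargmann_hermite_fun_cexp by (simp add: t_def sum_distrib_left mult_ac)
qed

end
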